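(* Let $z$ lie in the upper half-plane and let $E_4,\Delta_{24}$ and $h_n$ be as in the context. Then for every positive integer $n$, $$h_n(z)=2E_4(z)^n+\sum_{i=1}^{\lfloor n/3\rfloor}\frac{n}{i}\binom{n-i-1}{2i-1}2^{8i}\Delta_{24}(z)^iE_4(z)^{n-3i}.$$
   Context: For $z$ with $\mathrm{Im}(z)>0$ put $q=e^{\pi\sqrt{-1}z}$ and define $\vartheta_2(z)=\sum_{m\in\mathbb{Z}}q^{(m+1/2)^2}$, $\vartheta_3(z)=\sum_{m\in\mathbb{Z}}q^{m^2}$, $\vartheta_4(z)=\sum_{m\in\mathbb{Z}}(-q)^{m^2}$. Define $E_4(z)=\frac12(\vartheta_2(z)^8+\vartheta_3(z)^8+\vartheta_4(z)^8)$, $\Delta_{24}(z)=\left(\frac{\vartheta_2(z)\vartheta_3(z)\vartheta_4(z)}{2}\right)^8$, and for a nonnegative integer $n$, $h_n(z)=\vartheta_2(z)^{8n}+\vartheta_3(z)^{8n}+\vartheta_4(z)^{8n}$. *)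

theory Defs
  imports "HOL-Complex_Analysis.Complex_Analysis"
begin

text \<open>Jacobi theta functions, with q = exp(pi i z); q^r is read as exp(pi i z r).\<close>

definition theta2 :: "complex \<Rightarrow> complex" where
  "theta2 z = (\<Sum>\<^sub>\<infinity>m::int. exp (pi * \<i> * z * (of_int m + 1/2)^2))"

definition theta3 :: "complex \<Rightarrow> complex" where
  "theta3 z = (\<Sum>\<^sub>\<infinity>m::int. exp (pi * \<i> * z) ^ nat (m^2))"

definition theta4 :: "complex \<Rightarrow> complex" where
  "theta4 z = (\<Sum>\<^sub>\<infinity>m::int. (- exp (pi * \<i> * z)) ^ nat (m^2))"

definition E4 :: "complex \<Rightarrow> complex" where
  "E4 z = (theta2 z ^ 8 + theta3 z ^ 8 + theta4 z ^ 8) / 2"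

definition Delta24 :: "complex \<Rightarrow> complex" where
  "Delta24 z = (theta2 z * theta3 z * theta4 z / 2) ^ 8"

definition h :: "nat \<Rightarrow> complex \<Rightarrow> complex" where
  "h n z = theta2 z ^ (8*n) + theta3 z ^ (8*n) + theta4 z ^ (8*n)"

end

theory Submission
  imports Defs
begin

(* Splitting the double series for a theta function squared according to the parity of m + n
   turns it into products of theta series at 2z: theta3(z)^2 and theta4(z)^2 are
   theta3(2z)^2 +- theta2(2z)^2 and theta2(z)^2 = 2 theta2(2z) theta3(2z), which gives Jacobi's
   identity theta3^4 = theta2^4 + theta4^4. By that identity a = theta2^8, b = theta3^8,
   c = theta4^8 have elementary symmetric functions 2 E4, E4^2 and 2^8 Delta24, so their power
   sums h_n obey Newton's recurrence p(n+3) = 2 E4 p(n+2) - E4^2 p(n+1) + 2^8 Delta24 p(n).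
   The claimed closed form obeys the same recurrence, coefficientwise by a Pascal-type identity
   for binomials, and agrees with h_n for n = 1, 2, 3. *)

lemma summable_on_int_geometric:
  fixes \<rho> :: real
  assumes "0 \<le> \<rho>" "\<rho> < 1"
  shows "(\<lambda>m::int. \<rho> ^ nat \<bar>m\<bar>) summable_on UNIV"
proof -
  have geom: "(\<lambda>n::nat. \<rho> ^ n) summable_on UNIV"
    by (rule norm_summable_imp_summable_on) (use assms in \<open>simp add: summable_geometric\<close>)
  have "(\<lambda>m::int. \<rho> ^ nat \<bar>m\<bar>) summable_on range int"
    by (subst summable_on_reindex) (auto simp: o_def geom)
  moreover have "(\<lambda>m::int. \<rho> ^ nat \<bar>m\<bar>) summable_on range (\<lambda>n. - int (Suc n))"
    by (subst summable_on_reindex)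
       (auto simp: o_def inj_on_def nat_add_distrib intro: summable_on_cmult_right[OF geom])
  moreover have "range int \<union> range (\<lambda>n. - int (Suc n)) = UNIV"
  proof -
    have "m \<in> range int \<union> range (\<lambda>n. - int (Suc n))" for m
    proof (cases "m \<ge> 0")
      case True then show ?thesis by (auto intro!: image_eqI[of _ _ "nat m"])
    next
      case False then show ?thesis by (intro UnI2 image_eqI[of _ _ "nat (- m - 1)"]) auto
    qed
    then show ?thesis by blast
  qed
  ultimately show ?thesis using summable_on_union by metis
qed

lemma infsum_product_complex:
  fixes f :: "'a::countable \<Rightarrow> complex" and g :: "'b::countable \<Rightarrow> complex"
  assumes f: "f summable_on UNIV" and g: "g summable_on UNIV"
  shows "(\<Sum>\<^sub>\<infinity>(x, y). f x * g y) = (\<Sum>\<^sub>\<infinity>x. f x) * (\<Sum>\<^sub>\<infinity>y. g y)"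
    and "(\<lambda>(x, y). f x * g y) summable_on UNIV"
proof -
  have f': "Infinite_Set_Sum.abs_summable_on f UNIV"
    and g': "Infinite_Set_Sum.abs_summable_on g UNIV"
    using f g by (simp_all add: summable_on_iff_abs_summable_on_complex abs_summable_equivalent)
  have prod: "Infinite_Set_Sum.abs_summable_on (\<lambda>(x, y). f x * g y) (UNIV \<times> UNIV)"
    by (rule abs_summable_on_product[OF _ _ f' g']) auto
  then show "(\<lambda>(x, y). f x * g y) summable_on UNIV"
    by (simp add: summable_on_iff_abs_summable_on_complex abs_summable_equivalent)
  have "infsetsum (\<lambda>(x, y). f x * g y) (UNIV \<times> UNIV) = infsetsum f UNIV * infsetsum g UNIV"
    by (rule infsetsum_product[OF _ _ f' g']) auto
  then show "(\<Sum>\<^sub>\<infinity>(x, y). f x * g y) = (\<Sum>\<^sub>\<infinity>x. f x) * (\<Sum>\<^sub>\<infinity>y. g y)"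
    using prod f' g' by (simp add: infsetsum_infsum)
qed

lemma infsum_square_int_parity_split:
  fixes t :: "int \<Rightarrow> complex"
  assumes t: "t summable_on UNIV"
  shows "(\<Sum>\<^sub>\<infinity>m. t m)^2
           = (\<Sum>\<^sub>\<infinity>(a, b). t (a + b) * t (a - b)) + (\<Sum>\<^sub>\<infinity>(a, b). t (a + b + 1) * t (a - b))"
proof -
  define F where "F = (\<lambda>(m, n). t m * t n)"
  define ev where "ev = (\<lambda>(a::int, b::int). (a + b, a - b))"
  define od where "od = (\<lambda>(a::int, b::int). (a + b + 1, a - b))"
  have F: "F summable_on UNIV"
    unfolding F_def by (rule infsum_product_complex(2)[OF t t])
  have inj: "inj ev" "inj od"
    by (auto simp: inj_on_def ev_def od_def)
  have disjoint: "range ev \<inter> range od = {}"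
    unfolding ev_def od_def by auto presburger
  have cover: "range ev \<union> range od = UNIV"
  proof -
    have "(m, n) \<in> range ev \<union> range od" for m n :: int
    proof (cases "even (m + n)")
      case True
      then obtain k where "m + n = 2 * k" by (elim evenE)
      then show ?thesis by (intro UnI1 image_eqI[of _ _ "(k, m - k)"]) (auto simp: ev_def)
    next
      case False
      then obtain k where "m + n = 2 * k + 1" by (elim oddE)
      then show ?thesis by (intro UnI2 image_eqI[of _ _ "(k, m - 1 - k)"]) (auto simp: od_def)
    qed
    then show ?thesis by auto
  qed
  have "(\<Sum>\<^sub>\<infinity>m. t m)^2 = infsum F (range ev \<union> range od)"
    by (simp add: cover F_def power2_eq_square infsum_product_complex(1)[OF t t])
  also have "\<dots> = infsum F (range ev) + infsum F (range od)"
    by (intro infsum_Un_disjoint summable_on_subset[OF F] disjoint) auto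
  also have "\<dots> = infsum (F \<circ> ev) UNIV + infsum (F \<circ> od) UNIV"
    using inj by (simp add: infsum_reindex)
  finally show ?thesis
    by (simp add: F_def ev_def od_def o_def case_prod_unfold)
qed

definition qpow :: "complex \<Rightarrow> real \<Rightarrow> complex" where
  "qpow z r = exp (pi * \<i> * z * of_real r)"

lemma qpow_add: "qpow z r * qpow z s = qpow z (r + s)"
  by (simp add: qpow_def exp_add[symmetric] algebra_simps)

lemma qpow_double: "qpow (2 * z) r = qpow z (2 * r)"
  by (simp add: qpow_def mult_ac)

lemma norm_qpow: "norm (qpow z r) = exp (- pi * Im z * r)"
  by (simp add: qpow_def norm_exp_eq_Re)

lemma summable_on_qpow_int:
  fixes r :: "int \<Rightarrow> real" and c :: "int \<Rightarrow> complex"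
  assumes z: "Im z > 0" and r: "\<And>m. \<bar>of_int m\<bar> \<le> r m + 1" and c: "\<And>m. norm (c m) \<le> 1"
  shows "(\<lambda>m. c m * qpow z (r m)) summable_on UNIV"
proof -
  define \<tau> where "\<tau> = pi * Im z"
  have \<tau>: "\<tau> > 0" using z by (simp add: \<tau>_def)
  have bound: "norm (c m * qpow z (r m)) \<le> exp \<tau> * exp (- \<tau>) ^ nat \<bar>m\<bar>" for m
  proof -
    have "norm (c m * qpow z (r m)) \<le> exp (- \<tau> * r m)"
      using c[of m] by (simp add: norm_mult norm_qpow \<tau>_def mult_left_le_one_le)
    also have "\<dots> \<le> exp (- \<tau> * (\<bar>of_int m\<bar> - 1))"
      using r[of m] \<tau> by simp
    also have "\<dots> = exp \<tau> * exp (- \<tau>) ^ nat \<bar>m\<bar>"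
      by (simp add: exp_of_nat_mult[symmetric] exp_add[symmetric] algebra_simps)
    finally show ?thesis .
  qed
  have "(\<lambda>m::int. exp \<tau> * exp (- \<tau>) ^ nat \<bar>m\<bar>) summable_on UNIV"
    using \<tau> by (intro summable_on_cmult_right summable_on_int_geometric) auto
  then have "(\<lambda>m. norm (c m * qpow z (r m))) summable_on UNIV"
    by (rule summable_on_comparison_test) (use bound in auto)
  then show ?thesis by (rule abs_summable_summable)
qed

lemma abs_le_square_plus_1: "\<bar>x\<bar> \<le> x^2 + (1::real)"
  and abs_le_square_half_plus_1: "\<bar>x\<bar> \<le> (x + 1/2)^2 + (1::real)"
  using zero_le_power2[of "x - 1/2"] zero_le_power2[of "x + 1/2"] zero_le_power2[of "x + 1"]
  by (auto simp: abs_if power2_eq_square algebra_simps)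

lemma summable_theta3_series:
  "Im z > 0 \<Longrightarrow> (\<lambda>m::int. qpow z (of_int m ^ 2)) summable_on UNIV"
  using summable_on_qpow_int[of z "\<lambda>m. of_int m ^ 2" "\<lambda>_. 1"] abs_le_square_plus_1 by simp

lemma summable_theta2_series:
  "Im z > 0 \<Longrightarrow> (\<lambda>m::int. qpow z ((of_int m + 1/2)^2)) summable_on UNIV"
  using summable_on_qpow_int[of z "\<lambda>m. (of_int m + 1/2)^2" "\<lambda>_. 1"] abs_le_square_half_plus_1 by simp

lemma theta3_eq_qpow_series: "theta3 z = (\<Sum>\<^sub>\<infinity>m::int. qpow z (of_int m ^ 2))"
  unfolding theta3_def qpow_def
  by (intro infsum_cong) (simp add: exp_of_nat_mult[symmetric] mult_ac)

lemma theta4_eq_qpow_series: "theta4 z = (\<Sum>\<^sub>\<infinity>m::int. (-1) ^ nat (m^2) * qpow z (of_int m ^ 2))"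
  unfolding theta4_def qpow_def power_minus[of "exp (pi * \<i> * z)"]
  by (intro infsum_cong) (simp add: exp_of_nat_mult[symmetric] mult_ac)

lemma theta2_eq_qpow_series: "theta2 z = (\<Sum>\<^sub>\<infinity>m::int. qpow z ((of_int m + 1/2)^2))"
  unfolding theta2_def qpow_def by (intro infsum_cong) (simp add: mult_ac)

lemma qpow_mult_eq_qpow_double:
  assumes "r + s = 2 * (u + v)"
  shows "qpow z r * qpow z s = qpow (2 * z) u * qpow (2 * z) v"
  using assms by (simp add: qpow_add qpow_double)

lemma power_eq_if_square_eq_1:
  fixes x :: "'a::monoid_mult"
  assumes "x^2 = 1"
  shows "x ^ n = (if even n then 1 else x)"
proof (cases "even n")
  case True
  then obtain k where "n = 2 * k" by (elim evenE)
  then show ?thesis using assms by (simp add: power_mult)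
next
  case False
  then obtain k where "n = 2 * k + 1" by (elim oddE)
  then show ?thesis using assms by (simp add: power_add power_mult)
qed

lemma twisted_theta_square:
  fixes \<epsilon> :: complex
  assumes z: "Im z > 0" and \<epsilon>: "\<epsilon>^2 = 1"
  shows "(\<Sum>\<^sub>\<infinity>m::int. \<epsilon> ^ nat (m^2) * qpow z (of_int m ^ 2))^2
           = theta3 (2 * z)^2 + \<epsilon> * theta2 (2 * z)^2"
proof -
  define t where "t m = \<epsilon> ^ nat (m^2) * qpow z (of_int m ^ 2)" for m :: int
  define p where "p m = qpow (2 * z) (of_int m ^ 2)" for m :: int
  define q where "q m = qpow (2 * z) ((of_int m + 1/2)^2)" for m :: int
  have z2: "Im (2 * z) > 0" using z by simp
  have p: "p summable_on UNIV" and q: "q summable_on UNIV"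
    using summable_theta3_series[OF z2] summable_theta2_series[OF z2]
    by (simp_all add: p_def[abs_def] q_def[abs_def])
  have theta_p: "theta3 (2 * z) = (\<Sum>\<^sub>\<infinity>m. p m)"
    and theta_q: "theta2 (2 * z) = (\<Sum>\<^sub>\<infinity>m. q m)"
    by (simp_all add: theta3_eq_qpow_series theta2_eq_qpow_series p_def q_def)
  have "norm \<epsilon> ^ 2 = 1" using \<epsilon> by (metis norm_one norm_power)
  then have "norm \<epsilon> = 1" using norm_ge_zero[of \<epsilon>] by (auto simp: power2_eq_1_iff)
  then have t: "t summable_on UNIV"
    unfolding t_def[abs_def]
    by (intro summable_on_qpow_int[OF z]) (simp_all add: abs_le_square_plus_1 norm_power)
  have sign: "\<epsilon> ^ nat (x^2) * \<epsilon> ^ nat (y^2) = (if even (x + y) then 1 else \<epsilon>)" for x y :: int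
    by (simp add: power_add[symmetric] power_eq_if_square_eq_1[OF \<epsilon>] nat_add_distrib[symmetric]
                  even_nat_iff)
       (use \<epsilon> in \<open>simp add: power2_eq_square\<close>)
  have "t (a + b) * t (a - b) = p a * p b" for a b
  proof -
    have "t (a + b) * t (a - b) = (\<epsilon> ^ nat ((a + b)^2) * \<epsilon> ^ nat ((a - b)^2))
                                    * (qpow z (of_int (a + b) ^ 2) * qpow z (of_int (a - b) ^ 2))"
      by (simp only: t_def mult_ac)
    also have "\<dots> = p a * p b"
    proof -
      have "qpow z (of_int (a + b) ^ 2) * qpow z (of_int (a - b) ^ 2) = p a * p b"
        unfolding p_def by (rule qpow_mult_eq_qpow_double) (simp add: power2_eq_square algebra_simps)
      moreover have "even (a + b + (a - b))" by simp
      ultimately show ?thesis by (simp only: sign if_True mult_1_left)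
    qed
    finally show ?thesis .
  qed
  moreover have "t (a + b + 1) * t (a - b) = \<epsilon> * (q a * q b)" for a b
  proof -
    have "t (a + b + 1) * t (a - b) = (\<epsilon> ^ nat ((a + b + 1)^2) * \<epsilon> ^ nat ((a - b)^2))
                                    * (qpow z (of_int (a + b + 1) ^ 2) * qpow z (of_int (a - b) ^ 2))"
      by (simp only: t_def mult_ac)
    also have "\<dots> = \<epsilon> * (q a * q b)"
    proof -
      have "qpow z (of_int (a + b + 1) ^ 2) * qpow z (of_int (a - b) ^ 2) = q a * q b"
        unfolding q_def by (rule qpow_mult_eq_qpow_double) (simp add: power2_eq_square algebra_simps)
      moreover have "odd (a + b + 1 + (a - b))" by presburger
      ultimately show ?thesis by (simp only: sign if_False)
    qed
    finally show ?thesis .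
  qed
  ultimately have "(\<Sum>\<^sub>\<infinity>m. t m)^2
                     = (\<Sum>\<^sub>\<infinity>(a, b). p a * p b) + \<epsilon> * (\<Sum>\<^sub>\<infinity>(a, b). q a * q b)"
    by (simp add: infsum_square_int_parity_split[OF t] case_prod_unfold infsum_cmult_right')
  also have "\<dots> = theta3 (2 * z)^2 + \<epsilon> * theta2 (2 * z)^2"
    by (simp only: infsum_product_complex(1)[OF p p] infsum_product_complex(1)[OF q q]
                   power2_eq_square theta_p theta_q)
  finally show ?thesis by (simp add: t_def)
qed

lemma theta3_square:
  assumes "Im z > 0"
  shows "theta3 z ^ 2 = theta3 (2 * z)^2 + theta2 (2 * z)^2"
  using twisted_theta_square[OF assms, of 1] by (simp add: theta3_eq_qpow_series)

lemma theta4_square: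
  assumes "Im z > 0"
  shows "theta4 z ^ 2 = theta3 (2 * z)^2 - theta2 (2 * z)^2"
  using twisted_theta_square[OF assms, of "-1"] by (simp add: theta4_eq_qpow_series)

lemma theta2_square:
  assumes z: "Im z > 0"
  shows "theta2 z ^ 2 = 2 * theta2 (2 * z) * theta3 (2 * z)"
proof -
  define t where "t m = qpow z ((of_int m + 1/2)^2)" for m :: int
  define p where "p m = qpow (2 * z) (of_int m ^ 2)" for m :: int
  define q where "q m = qpow (2 * z) ((of_int m + 1/2)^2)" for m :: int
  have z2: "Im (2 * z) > 0" using z by simp
  have t: "t summable_on UNIV"
    using summable_theta2_series[OF z] by (simp add: t_def[abs_def])
  have p: "p summable_on UNIV" and q: "q summable_on UNIV"
    using summable_theta3_series[OF z2] summable_theta2_series[OF z2]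
    by (simp_all add: p_def[abs_def] q_def[abs_def])
  have shift: "bij_betw (\<lambda>a::int. a + 1) UNIV UNIV"
    by (rule bij_betwI[where g = "\<lambda>a. a - 1"]) auto
  have p_shift: "(\<lambda>a. p (a + 1)) summable_on UNIV"
                "(\<Sum>\<^sub>\<infinity>a. p (a + 1)) = (\<Sum>\<^sub>\<infinity>a. p a)"
    using p summable_on_reindex_bij_betw[OF shift] infsum_reindex_bij_betw[OF shift] by auto
  have theta_p: "theta3 (2 * z) = (\<Sum>\<^sub>\<infinity>m. p m)"
    and theta_q: "theta2 (2 * z) = (\<Sum>\<^sub>\<infinity>m. q m)"
    by (simp_all add: theta3_eq_qpow_series theta2_eq_qpow_series p_def q_def)
  have "t (a + b) * t (a - b) = q a * p b" for a b
    unfolding t_def p_def q_def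
    by (rule qpow_mult_eq_qpow_double) (simp add: power2_eq_square algebra_simps)
  moreover have "t (a + b + 1) * t (a - b) = p (a + 1) * q b" for a b
    unfolding t_def p_def q_def
    by (rule qpow_mult_eq_qpow_double) (simp add: power2_eq_square algebra_simps)
  ultimately have "theta2 z ^ 2
                     = (\<Sum>\<^sub>\<infinity>(a, b). q a * p b) + (\<Sum>\<^sub>\<infinity>(a, b). p (a + 1) * q b)"
    using infsum_square_int_parity_split[OF t]
    by (simp add: theta2_eq_qpow_series t_def case_prod_unfold)
  also have "\<dots> = (\<Sum>\<^sub>\<infinity>a. q a) * (\<Sum>\<^sub>\<infinity>b. p b) + (\<Sum>\<^sub>\<infinity>a. p a) * (\<Sum>\<^sub>\<infinity>b. q b)"
    by (simp only: infsum_product_complex(1)[OF q p] infsum_product_complex(1)[OF p_shift(1) q]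
                   p_shift(2))
  also have "\<dots> = 2 * theta2 (2 * z) * theta3 (2 * z)"
    by (simp add: theta_p theta_q)
  finally show ?thesis .
qed

theorem jacobi_identity:
  assumes "Im z > 0"
  shows "theta3 z ^ 4 = theta2 z ^ 4 + theta4 z ^ 4"
proof -
  have "theta3 z ^ 4 - theta4 z ^ 4 = (theta3 z ^ 2)^2 - (theta4 z ^ 2)^2"
    by simp
  also have "\<dots> = (theta2 z ^ 2)^2"
    unfolding theta2_square[OF assms] theta3_square[OF assms] theta4_square[OF assms]
    by (simp add: power2_eq_square algebra_simps)
  also have "\<dots> = theta2 z ^ 4"
    by simp
  finally show ?thesis by (simp add: diff_eq_eq)
qed

lemma binomial_second_difference:
  "((a + 2) choose (b + 2)) + (a choose (b + 2)) = 2 * ((a + 1) choose (b + 2)) + (a choose b)"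
  by (simp add: numeral_2_eq_2)

(* For i >= 1 this is n/i * C(n-i-1, 2i-1) (power_sum_coeff_closed_form); written with two
   binomials it is a natural number satisfying a Pascal-type recurrence in n. *)
definition power_sum_coeff :: "nat \<Rightarrow> nat \<Rightarrow> nat" where
  "power_sum_coeff n i =
     2 * ((n - i) choose (2*i)) + (if i = 0 then 0 else (n - i - 1) choose (2*i - 1))"

lemma power_sum_coeff_0 [simp]: "power_sum_coeff n 0 = 2"
  by (simp add: power_sum_coeff_def)

lemma power_sum_coeff_eq_0:
  assumes "n < 3 * i"
  shows "power_sum_coeff n i = 0"
proof -
  have "n - i < 2*i" "n - i - 1 < 2*i - 1" using assms by arith+
  then show ?thesis by (simp add: power_sum_coeff_def binomial_eq_0)
qed

lemma power_sum_coeff_Suc_rec: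
  assumes "1 \<le> m"
  shows "power_sum_coeff (m + 3) (Suc j) + power_sum_coeff (m + 1) (Suc j)
           = 2 * power_sum_coeff (m + 2) (Suc j) + power_sum_coeff m j"
proof -
  have even_part: "((m + 2 - j) choose (2*j + 2)) + ((m - j) choose (2*j + 2))
                     = 2 * ((m + 1 - j) choose (2*j + 2)) + ((m - j) choose (2*j))"
  proof (cases "j \<le> m")
    case True
    then show ?thesis
      using binomial_second_difference[of "m - j" "2*j"] by (simp add: Suc_diff_le)
  next
    case False
    then show ?thesis by (simp add: binomial_eq_0)
  qed
  have odd_part: "((m + 1 - j) choose (2*j + 1)) + ((m - 1 - j) choose (2*j + 1))
                    = 2 * ((m - j) choose (2*j + 1)) + (if j = 0 then 0 else (m - j - 1) choose (2*j - 1))"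
  proof (cases "j = 0")
    case True
    then show ?thesis using assms by simp
  next
    case False
    then obtain l where l: "j = Suc l" by (cases j) auto
    show ?thesis
    proof (cases "j < m")
      case True
      then obtain a where "m = Suc j + a" using less_imp_Suc_add by blast
      then show ?thesis
        using binomial_second_difference[of a "2*l + 1"] by (simp add: l)
    next
      case False
      then show ?thesis by (simp add: l binomial_eq_0)
    qed
  qed
  show ?thesis
    using even_part odd_part by (simp add: power_sum_coeff_def algebra_simps)
qed

definition power_sum_expr :: "'a::comm_ring_1 \<Rightarrow> 'a \<Rightarrow> nat \<Rightarrow> 'a" where
  "power_sum_expr E D n = (\<Sum>i\<le>n. of_nat (power_sum_coeff n i) * D ^ i * E ^ (n - 3*i))"

lemma power_sum_expr_atMost:
  assumes "n \<le> N"
  shows "(\<Sum>i\<le>N. of_nat (power_sum_coeff n i) * D ^ i * E ^ (n - 3*i)) = power_sum_expr E D n"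
  unfolding power_sum_expr_def
  by (rule sum.mono_neutral_right) (use assms in \<open>auto simp: power_sum_coeff_eq_0\<close>)

lemma power_sum_coeff_mult_power:
  "of_nat (power_sum_coeff n i) * E ^ (n + k - 3*i)
     = (of_nat (power_sum_coeff n i) * E ^ (n - 3*i) :: 'a::comm_ring_1) * E ^ k"
proof (cases "3 * i \<le> n")
  case True
  then show ?thesis by (simp add: power_add[symmetric] mult.assoc)
next
  case False
  then show ?thesis by (simp add: power_sum_coeff_eq_0)
qed

lemma power_sum_expr_rec:
  fixes E D :: "'a::comm_ring_1"
  assumes "1 \<le> m"
  shows "power_sum_expr E D (m + 3) + E^2 * power_sum_expr E D (m + 1)
           = 2 * E * power_sum_expr E D (m + 2) + D * power_sum_expr E D m"
proof -
  \<comment> \<open>\<open>M\<close> hides \<open>m + 2\<close> from the simplifier, which would otherwise unroll the sums.\<close>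
  define M where "M = m + 2"
  define c where "c n i = (of_nat (power_sum_coeff n i) :: 'a)" for n i
  define X where "X i = D ^ i * E ^ (m + 3 - 3*i)" for i
  have shifted: "E ^ (m + 3 - n) * power_sum_expr E D n = (\<Sum>i\<le>Suc M. c n i * X i)"
    if "n \<le> m + 3" for n
  proof -
    have summand: "E ^ (m + 3 - n) * (of_nat (power_sum_coeff n i) * D ^ i * E ^ (n - 3*i)) = c n i * X i" for i
      using power_sum_coeff_mult_power[of n i E "m + 3 - n"] that
      by (simp add: c_def X_def mult_ac)
    have "n \<le> Suc M" using that by (simp add: M_def)
    then show ?thesis
      by (simp only: power_sum_expr_atMost[symmetric] sum_distrib_left summand)
  qed
  have shifted_D: "D * power_sum_expr E D m = (\<Sum>j\<le>M. c m j * X (Suc j))"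
  proof -
    have summand: "D * (of_nat (power_sum_coeff m j) * D ^ j * E ^ (m - 3*j)) = c m j * X (Suc j)" for j
      by (simp add: c_def X_def mult_ac)
    have "m \<le> M" by (simp add: M_def)
    then show ?thesis
      by (simp only: power_sum_expr_atMost[symmetric] sum_distrib_left summand)
  qed
  have rec: "c (m + 3) (Suc j) + c (m + 1) (Suc j) = 2 * c (m + 2) (Suc j) + c m j" for j
    using arg_cong[OF power_sum_coeff_Suc_rec[OF assms, of j], of "of_nat :: nat \<Rightarrow> 'a"]
    by (simp add: c_def)
  have "power_sum_expr E D (m + 3) + E^2 * power_sum_expr E D (m + 1)
          = (\<Sum>i\<le>Suc M. (c (m + 3) i + c (m + 1) i) * X i)"
    using shifted[of "m + 3"] shifted[of "m + 1"] by (simp add: sum.distrib algebra_simps)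
  also have "\<dots> = (c (m + 3) 0 + c (m + 1) 0) * X 0
                    + (\<Sum>j\<le>M. (c (m + 3) (Suc j) + c (m + 1) (Suc j)) * X (Suc j))"
    by (rule sum.atMost_Suc_shift)
  also have "\<dots> = 2 * c (m + 2) 0 * X 0 + (\<Sum>j\<le>M. (2 * c (m + 2) (Suc j) + c m j) * X (Suc j))"
    by (simp only: rec) (simp add: c_def)
  also have "\<dots> = 2 * c (m + 2) 0 * X 0 + (\<Sum>j\<le>M. 2 * c (m + 2) (Suc j) * X (Suc j))
                    + (\<Sum>j\<le>M. c m j * X (Suc j))"
    by (simp add: distrib_right sum.distrib add.assoc)
  also have "\<dots> = (\<Sum>i\<le>Suc M. 2 * c (m + 2) i * X i) + D * power_sum_expr E D m"
    by (simp only: sum.atMost_Suc_shift shifted_D)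
  also have "\<dots> = 2 * E * power_sum_expr E D (m + 2) + D * power_sum_expr E D m"
    using shifted[of "m + 2"] by (simp add: sum_distrib_left mult.assoc)
  finally show ?thesis .
qed

lemma power_sum_expr_1: "power_sum_expr E D 1 = 2 * E"
  by (simp add: power_sum_expr_def power_sum_coeff_def numeral_2_eq_2)

lemma power_sum_expr_2: "power_sum_expr E D 2 = 2 * E^2"
  by (simp add: power_sum_expr_def power_sum_coeff_def numeral_2_eq_2)

lemma power_sum_expr_3: "power_sum_expr E D 3 = 2 * E^3 + 3 * D"
  by (simp add: power_sum_expr_def power_sum_coeff_def eval_nat_numeral)

lemma power_sum_three_rec:
  fixes a b c :: "'a::comm_ring_1"
  shows "a^(n+3) + b^(n+3) + c^(n+3)
           = (a + b + c) * (a^(n+2) + b^(n+2) + c^(n+2))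
             - (a*b + b*c + c*a) * (a^(n+1) + b^(n+1) + c^(n+1)) + a*b*c * (a^n + b^n + c^n)"
proof -
  have "x^(n+3) = (a + b + c) * x^(n+2) - (a*b + b*c + c*a) * x^(n+1) + a*b*c * x^n"
    if "x = a \<or> x = b \<or> x = c" for x
  proof -
    have "x^(n+3) - ((a + b + c) * x^(n+2) - (a*b + b*c + c*a) * x^(n+1) + a*b*c * x^n)
            = x^n * ((x - a) * (x - b) * (x - c))"
      by (simp add: power_add power2_eq_square power3_eq_cube algebra_simps)
    with that show ?thesis by auto
  qed
  from this[of a] this[of b] this[of c] show ?thesis by (simp add: algebra_simps)
qed

lemma third_order_recurrence_eqI:
  fixes u v :: "nat \<Rightarrow> 'a::{plus,times}"
  assumes u: "\<And>m. 1 \<le> m \<Longrightarrow> u (m + 3) = \<alpha> * u (m + 2) + \<beta> * u (m + 1) + \<gamma> * u m"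
    and v: "\<And>m. 1 \<le> m \<Longrightarrow> v (m + 3) = \<alpha> * v (m + 2) + \<beta> * v (m + 1) + \<gamma> * v m"
    and "u 1 = v 1" "u 2 = v 2" "u 3 = v 3" "1 \<le> n"
  shows "u n = v n"
  using \<open>1 \<le> n\<close>
proof (induction n rule: less_induct)
  case (less n)
  show ?case
  proof (cases "n \<le> 3")
    case True
    with less.prems have "n = 1 \<or> n = 2 \<or> n = 3" by auto
    with assms(3-5) show ?thesis by auto
  next
    case False
    then obtain m where "n = m + 3" "1 \<le> m" by (intro that[of "n - 3"]) auto
    with less.IH show ?thesis by (simp add: u v)
  qed
qed

(* n = 0 is excluded: a^0 + b^0 + c^0 = 3 but power_sum_expr E D 0 = 2. *)
lemma power_sum_eq_power_sum_expr:
  fixes a b c E D :: "'a::comm_ring_1"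
  assumes e1: "a + b + c = 2 * E" and e2: "a*b + b*c + c*a = E^2" and e3: "a*b*c = D"
    and "1 \<le> n"
  shows "a^n + b^n + c^n = power_sum_expr E D n"
proof (rule third_order_recurrence_eqI[where \<alpha> = "2 * E" and \<beta> = "- (E^2)" and \<gamma> = D])
  show "a^(m+3) + b^(m+3) + c^(m+3)
          = 2 * E * (a^(m+2) + b^(m+2) + c^(m+2)) + - (E^2) * (a^(m+1) + b^(m+1) + c^(m+1))
            + D * (a^m + b^m + c^m)" for m
    using power_sum_three_rec[of a m b c] by (simp add: e1 e2 e3)
  show "power_sum_expr E D (m + 3)
          = 2 * E * power_sum_expr E D (m + 2) + - (E^2) * power_sum_expr E D (m + 1) + D * power_sum_expr E D m"
    if "1 \<le> m" for m
    using power_sum_expr_rec[OF that, of E D] by (simp add: algebra_simps)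
  show "a^1 + b^1 + c^1 = power_sum_expr E D 1"
    using power_sum_expr_1[of E D] e1 by simp
  have "a^2 + b^2 + c^2 = (a + b + c)^2 - 2 * (a*b + b*c + c*a)"
    by (simp add: power2_eq_square algebra_simps)
  then show "a^2 + b^2 + c^2 = power_sum_expr E D 2"
    by (simp add: power_sum_expr_2 e1 e2 power2_eq_square)
  have "a^3 + b^3 + c^3 = (a + b + c)^3 - 3 * (a + b + c) * (a*b + b*c + c*a) + 3 * (a*b*c)"
    by (simp add: power2_eq_square power3_eq_cube algebra_simps)
  then show "a^3 + b^3 + c^3 = power_sum_expr E D 3"
    by (simp add: power_sum_expr_3 e1 e2 e3 power2_eq_square power3_eq_cube)
qed fact

lemma power_sum_coeff_closed_form:
  assumes "1 \<le> i"
  shows "i * power_sum_coeff n i = n * ((n - i - 1) choose (2*i - 1))"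
proof -
  have "(2*i) * ((n - i) choose (2*i)) = (n - i) * ((n - i - 1) choose (2*i - 1))"
    using times_binomial_minus1_eq[of "2*i" "n - i"] assms by simp
  then have "i * power_sum_coeff n i = (n - i + i) * ((n - i - 1) choose (2*i - 1))"
    using assms by (simp add: power_sum_coeff_def algebra_simps)
  also have "\<dots> = n * ((n - i - 1) choose (2*i - 1))"
  proof (cases "i \<le> n")
    case False
    then have "n - i - 1 < 2*i - 1" using assms by arith
    then show ?thesis by (simp add: binomial_eq_0)
  qed simp
  finally show ?thesis .
qed

lemma power_sum_expr_explicit:
  fixes E D :: "'a::field_char_0"
  shows "power_sum_expr E D n = 2 * E ^ n +
    (\<Sum>i = 1..n div 3. (of_nat n / of_nat i) * of_nat ((n - i - 1) choose (2*i - 1))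
       * D ^ i * E ^ (n - 3*i))"
proof -
  have "power_sum_expr E D n = 2 * E ^ n + (\<Sum>i = 1..n. of_nat (power_sum_coeff n i) * D ^ i * E ^ (n - 3*i))"
    by (simp add: power_sum_expr_def atMost_atLeast0 sum.atLeast_Suc_atMost)
  also have "(\<Sum>i = 1..n. of_nat (power_sum_coeff n i) * D ^ i * E ^ (n - 3*i))
               = (\<Sum>i = 1..n div 3. of_nat (power_sum_coeff n i) * D ^ i * E ^ (n - 3*i))"
    by (rule sum.mono_neutral_right) (auto simp: power_sum_coeff_eq_0)
  also have "\<dots> = (\<Sum>i = 1..n div 3. (of_nat n / of_nat i) * of_nat ((n - i - 1) choose (2*i - 1))
                                        * D ^ i * E ^ (n - 3*i))"
  proof (intro sum.cong refl)
    fix i assume "i \<in> {1..n div 3}"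
    then have "1 \<le> i" by simp
    then have "(of_nat i * of_nat (power_sum_coeff n i) :: 'a)
                 = of_nat n * of_nat ((n - i - 1) choose (2*i - 1))"
      by (simp only: power_sum_coeff_closed_form flip: of_nat_mult)
    with \<open>1 \<le> i\<close> show "of_nat (power_sum_coeff n i) * D ^ i * E ^ (n - 3*i)
                 = (of_nat n / of_nat i) * of_nat ((n - i - 1) choose (2*i - 1)) * D ^ i * E ^ (n - 3*i)"
      by (simp add: field_simps)
  qed
  finally show ?thesis .
qed

lemma theta8_pair_products:
  assumes "Im z > 0"
  shows "theta2 z ^ 8 * theta3 z ^ 8 + theta3 z ^ 8 * theta4 z ^ 8 + theta4 z ^ 8 * theta2 z ^ 8
           = E4 z ^ 2"
proof -
  define x where "x = theta2 z ^ 4"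
  define y where "y = theta4 z ^ 4"
  have "theta2 z ^ 8 = x^2" "theta4 z ^ 8 = y^2"
    by (simp_all add: x_def y_def flip: power_mult)
  moreover have "theta3 z ^ 8 = (x + y)^2"
    unfolding x_def y_def jacobi_identity[OF assms, symmetric] by (simp flip: power_mult)
  ultimately show ?thesis
    by (simp add: E4_def power2_eq_square field_simps)
qed

theorem theorem2p2:
  fixes z :: complex and n :: nat
  assumes "Im z > 0" and "n \<ge> 1"
  shows "h n z = 2 * E4 z ^ n +
    (\<Sum>i = 1..n div 3. (of_nat n / of_nat i) * of_nat ((n - i - 1) choose (2*i - 1))
       * 2 ^ (8*i) * Delta24 z ^ i * E4 z ^ (n - 3*i))"
proof -
  have "h n z = (theta2 z ^ 8)^n + (theta3 z ^ 8)^n + (theta4 z ^ 8)^n"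
    by (simp add: h_def power_mult)
  also have "\<dots> = power_sum_expr (E4 z) (2^8 * Delta24 z) n"
  proof (rule power_sum_eq_power_sum_expr)
    show "theta2 z ^ 8 + theta3 z ^ 8 + theta4 z ^ 8 = 2 * E4 z"
      by (simp add: E4_def)
    show "theta2 z ^ 8 * theta3 z ^ 8 * theta4 z ^ 8 = 2^8 * Delta24 z"
      by (simp add: Delta24_def power_mult_distrib power_divide)
  qed (use assms theta8_pair_products in auto)
  also have "\<dots> = 2 * E4 z ^ n +
    (\<Sum>i = 1..n div 3. (of_nat n / of_nat i) * of_nat ((n - i - 1) choose (2*i - 1))
       * 2 ^ (8*i) * Delta24 z ^ i * E4 z ^ (n - 3*i))"
    by (simp add: power_sum_expr_explicit power_mult_distrib power_mult mult.assoc)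
  finally show ?thesis .
qed

end
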